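(* Let $\mathcal G=(\mathcal V,\mathcal E,w)$ be a finite, undirected, connected graph with $n$ vertices and positive edge weights, and let $Q=D+A$ be its signless Laplacian matrix. Let $w^*>0$ be a real number that is the weight of at least one $(m,k)$-star of $\mathcal G$. Let $\mathcal S_{w^*}$ be the set of all $(m,k)$-stars of $\mathcal G$ (as $m,k$ range over the positive integers with $m+k\le n$) whose weight is defined and equals $w^*$, and let $\deg(\mathcal S_{w^*})=\sum_{S_{m,k}\in\mathcal S_{w^*}}(m-1)$. Then $w^*$ is an eigenvalue of $Q$ with algebraic multiplicity at least $\deg(\mathcal S_{w^*})$.
   Context: Weighted adjacency matrix: $A_{ij}=w(i,j)$ if $\{i,j\}\in\mathcal E$ and $A_{ij}=0$ otherwise (no loops); $D=\mathrm{diag}(s(1),\dots,s(n))$ with strength $s(i)=\sum_jA_{ij}$. An $(m,k)$-star of $\mathcal G$, denoted $S_{m,k}$, is a pair $(\mathcal V_1,\mathcal V_2)$ of disjoint vertex sets with $|\mathcal V_1|=m\ge 2$, $|\mathcal V_2|=k$, such that every vertex of $\mathcal V_1$ is adjacent to every vertex of $\mathcal V_2$ and to no vertex outside $\mathcal V_2$; the sets are uniquely determined, i.e. $\mathcal V_1$ is the set of all vertices whose neighbourhood is exactly $\mathcal V_2$ (so distinct stars have disjoint $\mathcal V_1$). Its degree is $m-1$. Its weight is defined only when $w(i,j)=w(i',j)$ for all $i,i'\in\mathcal V_1$, $j\in\mathcal V_2$, and then equals $\sum_{j\in\mathcal V_2}w(i,j)$ for any $i\in\mathcal V_1$. *)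

theory Defs
  imports "Jordan_Normal_Form.Char_Poly"
begin

text \<open>A weighted undirected graph on vertex set {0..<n} is encoded by its weighted
adjacency function A: A i j = w(i,j) > 0 if {i,j} is an edge, A i j = 0 otherwise.\<close>

definition weighted_graph :: "nat \<Rightarrow> (nat \<Rightarrow> nat \<Rightarrow> real) \<Rightarrow> bool" where
  "weighted_graph n A \<longleftrightarrow> n \<ge> 1 \<and>
     (\<forall>i j. A i j = A j i) \<and> (\<forall>i j. A i j \<ge> 0) \<and> (\<forall>i. A i i = 0) \<and>
     (\<forall>i j. (i \<ge> n \<or> j \<ge> n) \<longrightarrow> A i j = 0)"

definition adj :: "nat \<Rightarrow> (nat \<Rightarrow> nat \<Rightarrow> real) \<Rightarrow> nat \<Rightarrow> nat \<Rightarrow> bool" where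
  "adj n A i j \<longleftrightarrow> i < n \<and> j < n \<and> A i j > 0"

definition connected_graph :: "nat \<Rightarrow> (nat \<Rightarrow> nat \<Rightarrow> real) \<Rightarrow> bool" where
  "connected_graph n A \<longleftrightarrow> (\<forall>i<n. \<forall>j<n. (adj n A)\<^sup>*\<^sup>* i j)"

definition nbhd :: "nat \<Rightarrow> (nat \<Rightarrow> nat \<Rightarrow> real) \<Rightarrow> nat \<Rightarrow> nat set" where
  "nbhd n A i = {j. adj n A i j}"

definition strength :: "nat \<Rightarrow> (nat \<Rightarrow> nat \<Rightarrow> real) \<Rightarrow> nat \<Rightarrow> real" where
  "strength n A i = (\<Sum>j<n. A i j)"

definition signless_laplacian :: "nat \<Rightarrow> (nat \<Rightarrow> nat \<Rightarrow> real) \<Rightarrow> real mat" where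
  "signless_laplacian n A =
     mat n n (\<lambda>(i,j). (if i = j then strength n A i else 0) + A i j)"

definition is_star :: "nat \<Rightarrow> (nat \<Rightarrow> nat \<Rightarrow> real) \<Rightarrow> nat \<Rightarrow> nat \<Rightarrow> nat set \<Rightarrow> nat set \<Rightarrow> bool" where
  "is_star n A m k V1 V2 \<longleftrightarrow>
     V1 \<subseteq> {0..<n} \<and> V2 \<subseteq> {0..<n} \<and> V1 \<inter> V2 = {} \<and>
     card V1 = m \<and> m \<ge> 2 \<and> card V2 = k \<and> k \<ge> 1 \<and> m + k \<le> n \<and>
     V1 = {i. i < n \<and> nbhd n A i = V2}"

definition star_weight_defined :: "(nat \<Rightarrow> nat \<Rightarrow> real) \<Rightarrow> nat set \<Rightarrow> nat set \<Rightarrow> bool" where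
  "star_weight_defined A V1 V2 \<longleftrightarrow> (\<forall>i\<in>V1. \<forall>i'\<in>V1. \<forall>j\<in>V2. A i j = A i' j)"

definition star_weight :: "(nat \<Rightarrow> nat \<Rightarrow> real) \<Rightarrow> nat set \<Rightarrow> nat set \<Rightarrow> real" where
  "star_weight A V1 V2 = (\<Sum>j\<in>V2. A (SOME i. i \<in> V1) j)"

definition stars_of_weight :: "nat \<Rightarrow> (nat \<Rightarrow> nat \<Rightarrow> real) \<Rightarrow> real \<Rightarrow> (nat set \<times> nat set) set" where
  "stars_of_weight n A ws = {(V1, V2). \<exists>m k. is_star n A m k V1 V2 \<and>
       star_weight_defined A V1 V2 \<and> star_weight A V1 V2 = ws}"

definition stars_degree :: "nat \<Rightarrow> (nat \<Rightarrow> nat \<Rightarrow> real) \<Rightarrow> real \<Rightarrow> nat" where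
  "stars_degree n A ws = (\<Sum>(V1, V2)\<in>stars_of_weight n A ws. card V1 - 1)"

end

theory Submission
  imports Defs
begin

text \<open>For a star \<open>(V\<^sub>1, V\<^sub>2)\<close> of weight \<open>w\<^sup>*\<close> every \<open>i \<in> V\<^sub>1\<close> has strength \<open>w\<^sup>*\<close>, so the
  rows of \<open>Q - w\<^sup>* I\<close> indexed by \<open>V\<^sub>1\<close> all equal the common adjacency row. Subtracting the row of
  \<open>Min V\<^sub>1\<close> from the other rows of \<open>V\<^sub>1\<close> in the characteristic matrix \<open>x I - Q\<close> is a unimodular
  row operation after which each of those \<open>|V\<^sub>1| - 1\<close> rows is divisible by \<open>x - w\<^sup>*\<close>. Since distinct
  stars have disjoint \<open>V\<^sub>1\<close>, this yields \<open>deg(S\<^sub>w\<^sub>*)\<close> rows divisible by \<open>x - w\<^sup>*\<close>, hence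
  \<open>(x - w\<^sup>*)\<^bsup>deg(S\<^sub>w\<^sub>*)\<^esup>\<close> divides the characteristic polynomial.\<close>

lemma det_power_dvd_if_rows_dvd:
  fixes C :: "'a :: comm_ring_1 mat"
  assumes C: "C \<in> carrier_mat n n" and S: "S \<subseteq> {0..<n}"
    and rows_dvd: "\<And>i j. i \<in> S \<Longrightarrow> j < n \<Longrightarrow> q dvd C $$ (i,j)"
  shows "q ^ card S dvd det C"
proof -
  have "q ^ card S dvd signof p * (\<Prod>i = 0..<n. C $$ (i, p i))"
    if p: "p permutes {0..<n}" for p
  proof -
    have "(\<Prod>i\<in>S. q) dvd (\<Prod>i = 0..<n. C $$ (i, p i))"
      using S p by (intro prod_dvd_prod_subset2 rows_dvd) (auto simp: permutes_in_image)
    then show ?thesis by (simp add: dvd_mult2 mult.commute)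
  qed
  then show ?thesis unfolding det_def using C by (auto intro!: dvd_sum)
qed

lemma char_poly_matrix_entry:
  assumes "Q \<in> carrier_mat n n" "i < n" "j < n"
  shows "char_poly_matrix Q $$ (i,j) = (if i = j then [:0,1:] else 0) + [:- Q $$ (i,j):]"
  using assms unfolding char_poly_matrix_def by auto

lemma char_poly_power_dvd_if_shifted_rows_repeat:
  fixes Q :: "'a :: comm_ring_1 mat"
  assumes Q: "Q \<in> carrier_mat n n" and S: "S \<subseteq> {0..<n}"
    and earlier: "\<And>i. i \<in> S \<Longrightarrow> r i < i"
    and rows_eq: "\<And>i j. i \<in> S \<Longrightarrow> j < n \<Longrightarrow>
       Q $$ (i,j) - (if i = j then c else 0) = Q $$ (r i, j) - (if r i = j then c else 0)"
  shows "[:-c,1:] ^ card S dvd char_poly Q"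
proof -
  define C where "C = char_poly_matrix Q"
  have C: "C \<in> carrier_mat n n" unfolding C_def using Q by simp
  define P :: "'a poly mat" where
    "P = mat n n (\<lambda>(i,k). if i = k then 1 else if i \<in> S \<and> k = r i then -1 else 0)"
  have P: "P \<in> carrier_mat n n" unfolding P_def by simp
  have "det P = prod_list (diag_mat P)"
  proof (rule det_lower_triangular[OF _ P])
    fix i k assume "i < k" "k < n"
    with earlier show "P $$ (i,k) = 0" unfolding P_def by fastforce
  qed
  also have "\<dots> = 1" unfolding prod_list_diag_prod P_def by simp
  finally have "det (P * C) = char_poly Q"
    using det_mult[OF P C] unfolding char_poly_def C_def by simp
  moreover have "[:-c,1:] dvd (P * C) $$ (i,j)" if i: "i \<in> S" and j: "j < n" for i j
  proof -
    have "i < n" "r i < n" using S earlier[OF i] i by auto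
    have "(P * C) $$ (i,j) = (\<Sum>k = 0..<n. P $$ (i,k) * C $$ (k,j))"
      using P C \<open>i < n\<close> j by (simp add: scalar_prod_def)
    also have "\<dots> = (\<Sum>k = 0..<n. (if k = i then C $$ (k,j) else 0) - (if k = r i then C $$ (k,j) else 0))"
      using earlier[OF i] i \<open>i < n\<close> by (intro sum.cong) (auto simp: P_def)
    also have "\<dots> = C $$ (i,j) - C $$ (r i, j)"
      using \<open>i < n\<close> \<open>r i < n\<close> by (simp add: sum_subtractf)
    also have "\<dots> = [:-c,1:] * [:(if i = j then 1 else 0) - (if r i = j then 1 else 0):]"
      using rows_eq[OF i j] earlier[OF i]
      unfolding C_def char_poly_matrix_entry[OF Q \<open>i < n\<close> j] char_poly_matrix_entry[OF Q \<open>r i < n\<close> j]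
      by (cases "i = j"; cases "r i = j") (auto simp: algebra_simps)
    finally show ?thesis by (rule dvdI)
  qed
  ultimately show ?thesis
    using det_power_dvd_if_rows_dvd[OF mult_carrier_mat[OF P C] S] by metis
qed

lemma eigenvalue_order_if_char_poly_power_dvd:
  fixes Q :: "'a :: field mat"
  assumes Q: "Q \<in> carrier_mat n n" and dvd: "[:-c,1:] ^ k dvd char_poly Q" and "k > 0"
  shows "eigenvalue Q c \<and> k \<le> order c (char_poly Q)"
proof -
  have nz: "char_poly Q \<noteq> 0" using degree_monic_char_poly[OF Q] by auto
  have ord: "k \<le> order c (char_poly Q)" by (rule order_max[OF dvd nz])
  with \<open>k > 0\<close> nz have "poly (char_poly Q) c = 0" by (simp add: order_root)
  with ord show ?thesis using eigenvalue_root_char_poly[OF Q] by simp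
qed

lemma stars_of_weight_is_star:
  assumes "(V1, V2) \<in> stars_of_weight n A ws"
  shows "V1 \<subseteq> {0..<n}" "card V1 \<ge> 2" "V1 = {i. i < n \<and> nbhd n A i = V2}"
  using assms unfolding stars_of_weight_def is_star_def by auto

lemma finite_stars_of_weight: "finite (stars_of_weight n A ws)"
proof (rule finite_subset)
  show "stars_of_weight n A ws \<subseteq> Pow {0..<n} \<times> Pow {0..<n}"
    unfolding stars_of_weight_def is_star_def by auto
qed simp

lemma stars_of_weight_eq_if_common_vertex:
  assumes "(V1, V2) \<in> stars_of_weight n A ws" "(W1, W2) \<in> stars_of_weight n A ws"
    and "i \<in> V1" "i \<in> W1"
  shows "(V1, V2) = (W1, W2)"
  using stars_of_weight_is_star(3)[OF assms(1)] stars_of_weight_is_star(3)[OF assms(2)] assms(3,4)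
  by auto

lemma stars_degree_pos:
  assumes "stars_of_weight n A ws \<noteq> {}"
  shows "stars_degree n A ws > 0"
proof -
  from assms obtain V1 V2 where star: "(V1, V2) \<in> stars_of_weight n A ws" by auto
  have "0 < card V1 - 1" using stars_of_weight_is_star(2)[OF star] by simp
  also have "\<dots> \<le> stars_degree n A ws"
    unfolding stars_degree_def
    using member_le_sum[OF star, of "\<lambda>(V1, V2). card V1 - 1"] finite_stars_of_weight by simp
  finally show ?thesis .
qed

lemma star_vertex_adjacency_outside_zero:
  assumes wg: "weighted_graph n A" and star: "(V1, V2) \<in> stars_of_weight n A ws"
    and "i \<in> V1" "j \<notin> V2"
  shows "A i j = 0"
proof (cases "j < n")
  case True
  with assms(3,4) stars_of_weight_is_star(3)[OF star] have "\<not> A i j > 0"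
    unfolding nbhd_def adj_def by auto
  moreover have "A i j \<ge> 0" using wg unfolding weighted_graph_def by blast
  ultimately show ?thesis by linarith
next
  case False
  with wg show ?thesis unfolding weighted_graph_def by auto
qed

lemma star_vertices_same_adjacency:
  assumes wg: "weighted_graph n A" and star: "(V1, V2) \<in> stars_of_weight n A ws"
    and i: "i \<in> V1" and i': "i' \<in> V1"
  shows "A i j = A i' j"
proof (cases "j \<in> V2")
  case True
  with star i i' show ?thesis unfolding stars_of_weight_def star_weight_defined_def by blast
next
  case False
  with star_vertex_adjacency_outside_zero[OF wg star] i i' show ?thesis by simp
qed

lemma star_vertex_strength:
  assumes wg: "weighted_graph n A" and star: "(V1, V2) \<in> stars_of_weight n A ws" and i: "i \<in> V1"
  shows "strength n A i = ws"
proof -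
  have V2: "V2 \<subseteq> {0..<n}" using star unfolding stars_of_weight_def is_star_def by auto
  have "strength n A i = (\<Sum>j\<in>V2. A i j)"
    unfolding strength_def lessThan_atLeast0
    using V2 star_vertex_adjacency_outside_zero[OF wg star i] by (intro sum.mono_neutral_right) auto
  also have "\<dots> = (\<Sum>j\<in>V2. A (SOME i. i \<in> V1) j)"
    using star_vertices_same_adjacency[OF wg star i someI[of "\<lambda>x. x \<in> V1", OF i]] by simp
  also have "\<dots> = ws" using star unfolding stars_of_weight_def star_weight_def by auto
  finally show ?thesis .
qed

lemma signless_laplacian_carrier: "signless_laplacian n A \<in> carrier_mat n n"
  unfolding signless_laplacian_def by simp

lemma signless_laplacian_shifted_star_row:
  assumes wg: "weighted_graph n A" and star: "(V1, V2) \<in> stars_of_weight n A ws"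
    and i: "i \<in> V1" and j: "j < n"
  shows "signless_laplacian n A $$ (i,j) - (if i = j then ws else 0) = A i j"
  using stars_of_weight_is_star(1)[OF star] i j star_vertex_strength[OF wg star i]
  unfolding signless_laplacian_def by auto

text \<open>The rows to be reduced: all vertices of the stars in \<open>S\<^sub>w\<^sub>*\<close> except the least vertex of each
  star, each paired with that least vertex.\<close>

lemma stars_of_weight_reducible_rows:
  obtains S r where "card S = stars_degree n A ws" "S \<subseteq> {0..<n}"
    and "\<And>i. i \<in> S \<Longrightarrow> r i < i \<and> (\<exists>V1 V2. (V1, V2) \<in> stars_of_weight n A ws \<and> i \<in> V1 \<and> r i \<in> V1)"
proof
  let ?Sw = "stars_of_weight n A ws"
  define f where "f = (\<lambda>(V1 :: nat set, V2 :: nat set). V1 - {Min V1})"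
  define r where "r i = Min {i'. i' < n \<and> nbhd n A i' = nbhd n A i}" for i
  have finite_V1: "finite V1" if "(V1, V2) \<in> ?Sw" for V1 V2
    using stars_of_weight_is_star(1)[OF that] finite_subset by blast
  have card_f: "card (f x) = (case x of (V1, V2) \<Rightarrow> card V1 - 1)" if "x \<in> ?Sw" for x
  proof -
    obtain V1 V2 where x: "x = (V1, V2)" by fastforce
    have "V1 \<noteq> {}" using stars_of_weight_is_star(2) that x by fastforce
    then show ?thesis unfolding x f_def using finite_V1 that x by simp
  qed
  show "card (\<Union>(f ` ?Sw)) = stars_degree n A ws"
  proof -
    have "card (\<Union>(f ` ?Sw)) = (\<Sum>x\<in>?Sw. card (f x))"
    proof (rule card_UN_disjoint[OF finite_stars_of_weight])
      show "\<forall>x\<in>?Sw. finite (f x)" using finite_V1 unfolding f_def by auto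
      show "\<forall>x\<in>?Sw. \<forall>y\<in>?Sw. x \<noteq> y \<longrightarrow> f x \<inter> f y = {}"
        unfolding f_def using stars_of_weight_eq_if_common_vertex by fastforce
    qed
    also have "\<dots> = stars_degree n A ws"
      unfolding stars_degree_def using card_f by (auto intro: sum.cong)
    finally show ?thesis .
  qed
  show "\<Union>(f ` ?Sw) \<subseteq> {0..<n}"
    unfolding f_def using stars_of_weight_is_star(1) by fastforce
  fix i assume "i \<in> \<Union>(f ` ?Sw)"
  then obtain V1 V2 where star: "(V1, V2) \<in> ?Sw" and i: "i \<in> V1" "i \<noteq> Min V1"
    unfolding f_def by auto
  note twins = stars_of_weight_is_star(3)[OF star]
  with i have "r i = Min V1" unfolding r_def by auto
  with i finite_V1[OF star] have "r i \<in> V1" "r i < i"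
    by (auto intro: Min_in, metis Min_le le_neq_implies_less)
  with star i show "r i < i \<and> (\<exists>V1 V2. (V1, V2) \<in> ?Sw \<and> i \<in> V1 \<and> r i \<in> V1)" by blast
qed

theorem corollary1:
  fixes n :: nat and A :: "nat \<Rightarrow> nat \<Rightarrow> real" and ws :: real
  assumes "weighted_graph n A"
    and "connected_graph n A"
    and "ws > 0"
    and "stars_of_weight n A ws \<noteq> {}"
  shows "eigenvalue (signless_laplacian n A) ws \<and>
         order ws (char_poly (signless_laplacian n A)) \<ge> stars_degree n A ws"
proof -
  obtain S r where card_S: "card S = stars_degree n A ws" and S: "S \<subseteq> {0..<n}"
    and reducible: "\<And>i. i \<in> S \<Longrightarrow>
       r i < i \<and> (\<exists>V1 V2. (V1, V2) \<in> stars_of_weight n A ws \<and> i \<in> V1 \<and> r i \<in> V1)"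
    using stars_of_weight_reducible_rows[of n A ws] by blast
  have "[:-ws,1:] ^ card S dvd char_poly (signless_laplacian n A)"
  proof (rule char_poly_power_dvd_if_shifted_rows_repeat[OF signless_laplacian_carrier S])
    fix i j assume i: "i \<in> S" and j: "j < n"
    then obtain V1 V2 where star: "(V1, V2) \<in> stars_of_weight n A ws" "i \<in> V1" "r i \<in> V1"
      using reducible by blast
    then show "signless_laplacian n A $$ (i,j) - (if i = j then ws else 0) =
        signless_laplacian n A $$ (r i, j) - (if r i = j then ws else 0)"
      using signless_laplacian_shifted_star_row[OF assms(1) star(1) _ j]
        star_vertices_same_adjacency[OF assms(1) star] by simp
  qed (use reducible in blast)
  then show ?thesis
    using eigenvalue_order_if_char_poly_power_dvd[OF signless_laplacian_carrier]
      stars_degree_pos[OF assms(4)] card_S by auto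
qed

end
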